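(* Let $n,m$ be positive integers, $V=\{1,\dots,n\}$, and let $CCP$ be the cycle clustering polytope for $V$ and $m$ clusters (defined in the context). Let $K=\{(i_1,i_2),(i_2,i_3),\dots,(i_{\ell-1},i_\ell),(i_\ell,i_1)\}$ be a directed cycle on distinct vertices $i_1,\dots,i_\ell\in V$ with $1<\ell<m$, and let $U\subsetneq K$ be a strict subset. Then the extended subtour inequality $$\sum_{(i,j)\in K} z_{i,j}+\sum_{(i,j)\in U} y_{i,j}\le |K|-1$$ is valid for $CCP$.
   Context: Let $V=\{1,\dots,n\}$, $E=\{\{i,j\}: i,j\in V, i\neq j\}$, $A=\{(i,j)\in V\times V: i\neq j\}$, and $\mathcal{K}=\{1,\dots,m\}$. Cluster indices are taken cyclically: $x_{i,m+1}=x_{i,1}$ and $x_{i,0}=x_{i,m}$. There are binary variables $x_{i,s}$ ($i\in V$, $s\in\mathcal{K}$), $y_{i,j}$ for each $\{i,j\}\in E$ with $i<j$ (with the shorthand $y_{j,i}=y_{i,j}$), and $z_{i,j}$ for each $(i,j)\in A$. The cycle clustering polytope $CCP$ is the convex hull of all binary $(x,y,z)$ satisfying: $\sum_{s\in\mathcal{K}} x_{i,s}=1$ for all $i\in V$; $\sum_{i\in V}x_{i,s}\ge 1$ for all $s\in\mathcal{K}$; $y_{i,j}+z_{i,j}+z_{j,i}\le 1$ for all $\{i,j\}\in E$; $x_{i,s}+x_{j,s}-y_{i,j}+z_{i,j}-x_{j,s+1}-x_{i,s-1}\le 1$ for all $(i,j)\in A$, $s\in\mathcal{K}$; and $x_{i,s}+x_{j,s+1}-z_{i,j}+y_{i,j}-x_{j,s}-x_{i,s+1}\le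 1$ for all $(i,j)\in A$, $s\in\mathcal{K}$. *)

theory Defs
  imports Main "HOL-Analysis.Analysis"
begin

text \<open>A point of the space: x i s (i in V, s in {1..m}), y i j (i < j, edge {i,j}),
  z i j (i ~= j, arc (i,j)). Coordinates outside these index sets are fixed to 0.\<close>
type_synonym ccpoint = "(nat \<Rightarrow> nat \<Rightarrow> real) \<times> (nat \<Rightarrow> nat \<Rightarrow> real) \<times> (nat \<Rightarrow> nat \<Rightarrow> real)"

definition csucc :: "nat \<Rightarrow> nat \<Rightarrow> nat" where
  "csucc m s = (if s = m then 1 else s + 1)"
definition cpred :: "nat \<Rightarrow> nat \<Rightarrow> nat" where
  "cpred m s = (if s = 1 then m else s - 1)"

definition ysym :: "(nat \<Rightarrow> nat \<Rightarrow> real) \<Rightarrow> nat \<Rightarrow> nat \<Rightarrow> real" where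
  "ysym y i j = y (min i j) (max i j)"

definition ccp_points :: "nat \<Rightarrow> nat \<Rightarrow> ccpoint set" where
  "ccp_points n m = {(x, y, z).
     (\<forall>i s. x i s \<in> {0, 1} \<and> (\<not> (i \<in> {1..n} \<and> s \<in> {1..m}) \<longrightarrow> x i s = 0)) \<and>
     (\<forall>i j. y i j \<in> {0, 1} \<and> (\<not> (i \<in> {1..n} \<and> j \<in> {1..n} \<and> i < j) \<longrightarrow> y i j = 0)) \<and>
     (\<forall>i j. z i j \<in> {0, 1} \<and> (\<not> (i \<in> {1..n} \<and> j \<in> {1..n} \<and> i \<noteq> j) \<longrightarrow> z i j = 0)) \<and>
     (\<forall>i\<in>{1..n}. (\<Sum>s=1..m. x i s) = 1) \<and>
     (\<forall>s\<in>{1..m}. (\<Sum>i=1..n. x i s) \<ge> 1) \<and>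
     (\<forall>i\<in>{1..n}. \<forall>j\<in>{1..n}. i < j \<longrightarrow> y i j + z i j + z j i \<le> 1) \<and>
     (\<forall>i\<in>{1..n}. \<forall>j\<in>{1..n}. i \<noteq> j \<longrightarrow> (\<forall>s\<in>{1..m}.
        x i s + x j s - ysym y i j + z i j - x j (csucc m s) - x i (cpred m s) \<le> 1 \<and>
        x i s + x j (csucc m s) - z i j + ysym y i j - x j s - x i (csucc m s) \<le> 1))}"

text \<open>The cycle clustering polytope: convex hull (set of finite convex combinations) of ccp_points.\<close>
definition CCP :: "nat \<Rightarrow> nat \<Rightarrow> ccpoint set" where
  "CCP n m = {(x, y, z). \<exists>(k::nat) (c :: nat \<Rightarrow> real) (q :: nat \<Rightarrow> ccpoint).
      (\<forall>t<k. c t \<ge> 0 \<and> q t \<in> ccp_points n m) \<and> (\<Sum>t<k. c t) = 1 \<and>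
      x = (\<lambda>i s. \<Sum>t<k. c t * fst (q t) i s) \<and>
      y = (\<lambda>i j. \<Sum>t<k. c t * fst (snd (q t)) i j) \<and>
      z = (\<lambda>i j. \<Sum>t<k. c t * snd (snd (q t)) i j)}"

definition cycle_arcs :: "nat list \<Rightarrow> (nat \<times> nat) set" where
  "cycle_arcs cyc = {(cyc ! k, cyc ! ((k + 1) mod length cyc)) | k. k < length cyc}"

end

theory Submission
  imports Defs "HOL-Number_Theory.Cong"
begin

text \<open>The inequality is linear in (y, z), so it suffices to check it on the integer points.
  There every node i lies in exactly one cluster c(i); an arc (i,j) has z = 1 only if
  c(j) is the cyclic successor of c(i), and y = 1 only if c(j) = c(i). If every arc of K
  contributed 1 to the left-hand side, walking once around K would move through the
  clusters by steps of 0 or +1 (mod m) and return to the start, so the number of +1 steps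
  would be a multiple of m. Since |K| < m there are none, so every arc has z = 0 and
  must lie in U, contradicting U \<noteq> K.\<close>

lemma sum_rotate_mod:
  fixes f :: "nat \<Rightarrow> 'a::comm_monoid_add"
  shows "(\<Sum>k<l. f ((k + 1) mod l)) = (\<Sum>k<l. f k)"
proof (cases l)
  case (Suc l')
  have "(\<Sum>k<Suc l'. f (Suc k mod Suc l')) = (\<Sum>k<l'. f (Suc k)) + f 0"
    by (simp add: sum.lessThan_Suc)
  also have "\<dots> = (\<Sum>k<Suc l'. f k)"
    unfolding sum.lessThan_Suc_shift by (rule add.commute)
  finally show ?thesis using Suc by simp
qed simp

lemma cyclic_increments_sum_cong_0:
  fixes c d :: "nat \<Rightarrow> nat"
  assumes "\<forall>k<l. [c ((k + 1) mod l) = c k + d k] (mod m)"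
  shows "[(\<Sum>k<l. d k) = 0] (mod m)"
proof -
  have "[(\<Sum>k<l. c ((k + 1) mod l)) = (\<Sum>k<l. c k + d k)] (mod m)"
    using assms by (intro cong_sum) simp
  then have "[(\<Sum>k<l. c k) = (\<Sum>k<l. c k) + (\<Sum>k<l. d k)] (mod m)"
    unfolding sum_rotate_mod[of c l] sum.distrib .
  then have "[(\<Sum>k<l. c k) + (\<Sum>k<l. d k) = (\<Sum>k<l. c k)] (mod m)"
    by (rule cong_sym)
  then show ?thesis
    by (simp only: cong_add_lcancel_0_nat)
qed

lemma csucc_cong_Suc: "[csucc m s = Suc s] (mod m)"
  using mod_Suc_eq[of m m] by (simp add: csucc_def cong_def)

lemma cyclic_walk_never_advances:
  fixes c :: "nat \<Rightarrow> nat"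
  assumes "0 < l" "l < m"
    and steps: "\<forall>k<l. c ((k + 1) mod l) = csucc m (c k) \<or> c ((k + 1) mod l) = c k"
  shows "\<forall>k<l. c ((k + 1) mod l) \<noteq> csucc m (c k)"
proof -
  define d where "d k = (if c ((k + 1) mod l) = csucc m (c k) then 1 else 0 :: nat)" for k
  have "\<forall>k<l. [c ((k + 1) mod l) = c k + d k] (mod m)"
    using steps csucc_cong_Suc by (auto simp: d_def)
  then have "m dvd (\<Sum>k<l. d k)"
    using cyclic_increments_sum_cong_0 by (simp add: cong_0_iff)
  moreover have "(\<Sum>k<l. d k) \<le> l"
    using sum_bounded_above[of "{..<l}" d 1] by (simp add: d_def)
  ultimately have "(\<Sum>k<l. d k) = 0"
    using \<open>l < m\<close> dvd_imp_le by (meson le_less_trans not_gr0 not_le)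
  then show ?thesis
    by (simp add: d_def split: if_splits)
qed

lemma sum_le_card_minus_1:
  fixes f :: "'a \<Rightarrow> 'b::linordered_idom"
  assumes "finite A" "a \<in> A" "f a \<le> 0" "\<forall>b\<in>A. f b \<le> 1"
  shows "sum f A \<le> of_nat (card A) - 1"
proof -
  have "sum f A = f a + sum f (A - {a})"
    using assms(1,2) by (simp add: sum.remove)
  also have "\<dots> \<le> 0 + of_nat (card (A - {a})) * 1"
    using assms(3,4) by (intro add_mono sum_bounded_above) auto
  also have "\<dots> = of_nat (card A) - 1"
    using card.remove[OF assms(1,2)] by simp
  finally show ?thesis .
qed

lemma sum_binary_eq_1_unique:
  fixes f :: "'a \<Rightarrow> real"
  assumes "finite A" "\<forall>a\<in>A. f a \<in> {0, 1}" "sum f A = 1"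
  obtains a where "a \<in> A" "\<forall>b\<in>A. f b = (if b = a then 1 else 0)"
proof -
  have "\<exists>a\<in>A. f a \<noteq> 0"
  proof (rule ccontr)
    assume "\<not> (\<exists>a\<in>A. f a \<noteq> 0)"
    then have "sum f A = 0" by simp
    with assms(3) show False by simp
  qed
  then obtain a where a: "a \<in> A" "f a = 1"
    using assms(2) by auto
  have "f b = 0" if "b \<in> A" "b \<noteq> a" for b
  proof (rule ccontr)
    assume "f b \<noteq> 0"
    with assms(2) that have "f b = 1" by blast
    moreover have "sum f {a, b} \<le> sum f A"
      using assms that a by (intro sum_mono2) auto
    ultimately show False
      using a that assms(3) by simp
  qed
  with a that show ?thesis by auto
qed

lemma ccp_point_binary:
  assumes "(x, y, z) \<in> ccp_points n m"
  shows "x i s \<in> {0, 1}" "ysym y i j \<in> {0, 1}" "z i j \<in> {0, 1}"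
  using assms by (auto simp: ccp_points_def ysym_def)

lemma ccp_point_cluster:
  assumes p: "(x, y, z) \<in> ccp_points n m" and "i \<in> {1..n}"
  obtains s where "s \<in> {1..m}" "x i = (\<lambda>t. if t = s then 1 else 0)"
proof -
  have sum1: "(\<Sum>t=1..m. x i t) = 1" and out: "\<forall>t. t \<notin> {1..m} \<longrightarrow> x i t = 0"
    using assms by (auto simp: ccp_points_def)
  obtain s where s: "s \<in> {1..m}" "\<forall>t\<in>{1..m}. x i t = (if t = s then 1 else 0)"
    using sum_binary_eq_1_unique[OF finite_atLeastAtMost _ sum1] ccp_point_binary(1)[OF p]
    by blast
  have "x i = (\<lambda>t. if t = s then 1 else 0)"
  proof
    fix t
    show "x i t = (if t = s then 1 else 0)"
      using s out by (cases "t \<in> {1..m}") auto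
  qed
  with s(1) that show ?thesis by blast
qed

lemma ccp_point_ysym_z_le_1:
  assumes "(x, y, z) \<in> ccp_points n m" "i \<in> {1..n}" "j \<in> {1..n}" "i \<noteq> j"
  shows "ysym y i j + z i j \<le> 1"
proof -
  have "ysym y i j + z i j + z j i \<le> 1"
  proof (cases "i < j")
    case True
    then show ?thesis using assms by (auto simp: ccp_points_def ysym_def)
  next
    case False
    then have "y j i + z j i + z i j \<le> 1"
      using assms by (auto simp: ccp_points_def)
    then show ?thesis using False \<open>i \<noteq> j\<close> by (simp add: ysym_def min_def max_def)
  qed
  moreover have "z j i \<ge> 0"
    using ccp_point_binary(3)[OF assms(1), of j i] by auto
  ultimately show ?thesis by linarith
qed

lemma ccp_point_arc_clusters:
  assumes p: "(x, y, z) \<in> ccp_points n m" and "2 \<le> m"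
    and ij: "i \<in> {1..n}" "j \<in> {1..n}" "i \<noteq> j" and a: "a \<in> {1..m}"
    and xi: "x i = (\<lambda>t. if t = a then 1 else 0)"
    and xj: "x j = (\<lambda>t. if t = b then 1 else 0)"
  shows "z i j = 1 \<Longrightarrow> b = csucc m a" and "ysym y i j = 1 \<Longrightarrow> b = a"
proof -
  have c1: "x i a + x j a - ysym y i j + z i j - x j (csucc m a) - x i (cpred m a) \<le> 1"
   and c2: "x i a + x j (csucc m a) - z i j + ysym y i j - x j a - x i (csucc m a) \<le> 1"
    using p ij a by (auto simp: ccp_points_def)
  have ne: "csucc m a \<noteq> a" "cpred m a \<noteq> a"
    using \<open>2 \<le> m\<close> a by (auto simp: csucc_def cpred_def)
  have le1: "ysym y i j + z i j \<le> 1"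
    using ccp_point_ysym_z_le_1[OF p ij] .
  have xi_vals: "x i a = 1" "x i (cpred m a) = 0" "x i (csucc m a) = 0"
    using ne by (simp_all add: xi)
  have xj_nonneg: "x j t \<ge> 0" for t
    by (simp add: xj)
  show "b = csucc m a" if "z i j = 1"
  proof (rule ccontr)
    assume "b \<noteq> csucc m a"
    then have "x j (csucc m a) = 0" by (simp add: xj)
    then show False
      using c1 xi_vals xj_nonneg[of a] le1 that by linarith
  qed
  show "b = a" if "ysym y i j = 1"
  proof (rule ccontr)
    assume "b \<noteq> a"
    then have "x j a = 0" by (simp add: xj)
    then show False
      using c2 xi_vals xj_nonneg[of "csucc m a"] le1 that by linarith
  qed
qed

lemma cycle_arcs_subset: "cycle_arcs cyc \<subseteq> set cyc \<times> set cyc"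
  by (auto simp: cycle_arcs_def intro!: nth_mem mod_less_divisor)

lemma finite_cycle_arcs: "finite (cycle_arcs cyc)"
  using cycle_arcs_subset finite_subset by blast

lemma cycle_arcs_irrefl:
  assumes "distinct cyc" "1 < length cyc"
  shows "(i, i) \<notin> cycle_arcs cyc"
proof
  assume "(i, i) \<in> cycle_arcs cyc"
  then obtain k where k: "k < length cyc" "cyc ! k = cyc ! ((k + 1) mod length cyc)"
    by (auto simp: cycle_arcs_def)
  moreover have "(k + 1) mod length cyc < length cyc"
    using k(1) by (intro mod_less_divisor) linarith
  ultimately have k_eq: "k = (k + 1) mod length cyc"
    using nth_eq_iff_index_eq[OF assms(1)] by blast
  show False
  proof (cases "k + 1 < length cyc")
    case True
    then have "(k + 1) mod length cyc = k + 1"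
      by (rule mod_less)
    with k_eq show False by simp
  next
    case False
    with k(1) have "k + 1 = length cyc" by simp
    with k_eq have "k = 0" by simp
    with \<open>k + 1 = length cyc\<close> assms(2) show False by simp
  qed
qed

lemma ccp_point_cycle_has_slack_arc:
  assumes p: "(x, y, z) \<in> ccp_points n m"
    and cyc: "distinct cyc" "set cyc \<subseteq> {1..n}" "1 < length cyc" "length cyc < m"
    and U: "U \<subset> cycle_arcs cyc"
  shows "\<exists>(i, j) \<in> cycle_arcs cyc. z i j = 0 \<and> ((i, j) \<notin> U \<or> ysym y i j = 0)"
proof (rule ccontr)
  assume "\<not> ?thesis"
  then have tight: "z i j = 1 \<or> ((i, j) \<in> U \<and> ysym y i j = 1)"
    if "(i, j) \<in> cycle_arcs cyc" for i j
    using that ccp_point_binary(2,3)[OF p, of i j] by auto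
  have "\<forall>i\<in>{1..n}. \<exists>s. s \<in> {1..m} \<and> x i = (\<lambda>t. if t = s then 1 else 0)"
    using ccp_point_cluster[OF p] by (metis (no_types))
  then obtain cl where cl: "\<forall>i\<in>{1..n}. cl i \<in> {1..m} \<and> x i = (\<lambda>t. if t = cl i then 1 else 0)"
    by metis
  define l where "l = length cyc"
  define c where "c k = cl (cyc ! k)" for k
  have l_bounds: "0 < l" "l < m"
    using cyc(3,4) unfolding l_def by linarith+
  then have "2 \<le> m"
    by simp
  have arc: "(cyc ! k, cyc ! ((k + 1) mod l)) \<in> cycle_arcs cyc" if "k < l" for k
    using that by (auto simp: cycle_arcs_def l_def)
  have arc_step:
    "z (cyc ! k) (cyc ! ((k + 1) mod l)) = 1 \<Longrightarrow> c ((k + 1) mod l) = csucc m (c k)"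
    "ysym y (cyc ! k) (cyc ! ((k + 1) mod l)) = 1 \<Longrightarrow> c ((k + 1) mod l) = c k"
    if "k < l" for k
  proof -
    have ends: "cyc ! k \<in> {1..n}" "cyc ! ((k + 1) mod l) \<in> {1..n}"
      using arc[OF that] cycle_arcs_subset[of cyc] cyc(2) by blast+
    have ne: "cyc ! k \<noteq> cyc ! ((k + 1) mod l)"
      using arc[OF that] cycle_arcs_irrefl[OF cyc(1,3)] by auto
    have cls: "cl (cyc ! k) \<in> {1..m}" "x (cyc ! k) = (\<lambda>t. if t = cl (cyc ! k) then 1 else 0)"
      "x (cyc ! ((k + 1) mod l)) = (\<lambda>t. if t = cl (cyc ! ((k + 1) mod l)) then 1 else 0)"
      using cl ends by auto
    note clusters = ccp_point_arc_clusters[OF p \<open>2 \<le> m\<close> ends ne cls]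
    show "z (cyc ! k) (cyc ! ((k + 1) mod l)) = 1 \<Longrightarrow> c ((k + 1) mod l) = csucc m (c k)"
      unfolding c_def by (rule clusters(1))
    show "ysym y (cyc ! k) (cyc ! ((k + 1) mod l)) = 1 \<Longrightarrow> c ((k + 1) mod l) = c k"
      unfolding c_def by (rule clusters(2))
  qed
  have "\<forall>k<l. c ((k + 1) mod l) = csucc m (c k) \<or> c ((k + 1) mod l) = c k"
    using tight[OF arc] arc_step by blast
  then have "\<forall>k<l. c ((k + 1) mod l) \<noteq> csucc m (c k)"
    by (rule cyclic_walk_never_advances[OF l_bounds])
  then have "(cyc ! k, cyc ! ((k + 1) mod l)) \<in> U" if "k < l" for k
    using that tight[OF arc] arc_step by blast
  then have "cycle_arcs cyc \<subseteq> U"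
    by (auto simp: cycle_arcs_def l_def)
  with U show False by blast
qed

lemma ccp_points_subtour_inequality:
  assumes p: "(x, y, z) \<in> ccp_points n m"
    and cyc: "distinct cyc" "set cyc \<subseteq> {1..n}" "1 < length cyc" "length cyc < m"
    and U: "U \<subset> cycle_arcs cyc"
  shows "(\<Sum>(i, j) \<in> cycle_arcs cyc. z i j) + (\<Sum>(i, j) \<in> U. ysym y i j)
           \<le> real (card (cycle_arcs cyc)) - 1"
proof -
  define K where "K = cycle_arcs cyc"
  define g where
    "g a = (case a of (i, j) \<Rightarrow> z i j) + (if a \<in> U then (case a of (i, j) \<Rightarrow> ysym y i j) else 0)"
    for a
  have y_part: "(\<Sum>(i, j) \<in> U. ysym y i j)
      = (\<Sum>a\<in>K. if a \<in> U then (case a of (i, j) \<Rightarrow> ysym y i j) else 0)"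
    using sum.inter_restrict[OF finite_cycle_arcs, of _ cyc U] U by (simp add: K_def Int_absorb1)
  have sum_g: "(\<Sum>(i, j) \<in> K. z i j) + (\<Sum>(i, j) \<in> U. ysym y i j) = sum g K"
    unfolding g_def sum.distrib y_part ..
  have g_le_1: "g a \<le> 1" if "a \<in> K" for a
  proof (cases a)
    case (Pair i j)
    with that cycle_arcs_subset[of cyc] cyc(2) have ends: "i \<in> {1..n}" "j \<in> {1..n}"
      by (auto simp: K_def)
    moreover have "i \<noteq> j"
      using that Pair cycle_arcs_irrefl[OF cyc(1,3)] by (auto simp: K_def)
    moreover have "ysym y i j \<ge> 0"
      using ccp_point_binary(2)[OF p, of i j] by auto
    ultimately show ?thesis
      using ccp_point_ysym_z_le_1[OF p ends \<open>i \<noteq> j\<close>] Pair by (auto simp: g_def)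
  qed
  obtain a where "a \<in> K" "g a = 0"
    using ccp_point_cycle_has_slack_arc[OF p cyc U] by (auto simp: K_def g_def)
  then have "sum g K \<le> real (card K) - 1"
    using sum_le_card_minus_1[of K a g] finite_cycle_arcs g_le_1 by (auto simp: K_def)
  with sum_g show ?thesis
    by (simp add: K_def)
qed

lemma CCP_inequality_if_ccp_points:
  fixes A B :: "(nat \<times> nat) set" and b :: real
  assumes valid:
    "\<forall>(x, y, z) \<in> ccp_points n m. (\<Sum>(i, j) \<in> A. z i j) + (\<Sum>(i, j) \<in> B. ysym y i j) \<le> b"
  shows "\<forall>(x, y, z) \<in> CCP n m. (\<Sum>(i, j) \<in> A. z i j) + (\<Sum>(i, j) \<in> B. ysym y i j) \<le> b"
proof clarify
  fix x y z
  assume "(x, y, z) \<in> CCP n m"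
  then obtain k c and q :: "nat \<Rightarrow> ccpoint"
    where cq: "\<forall>t<k. c t \<ge> 0 \<and> q t \<in> ccp_points n m" "(\<Sum>t<k. c t) = 1"
    and y: "y = (\<lambda>i j. \<Sum>t<k. c t * fst (snd (q t)) i j)"
    and z: "z = (\<lambda>i j. \<Sum>t<k. c t * snd (snd (q t)) i j)"
    unfolding CCP_def mem_Collect_eq case_prod_conv by blast
  define F where
    "F p = (\<Sum>(i, j) \<in> A. snd (snd p) i j) + (\<Sum>(i, j) \<in> B. ysym (fst (snd p)) i j)"
    for p :: ccpoint
  have F_le: "F (q t) \<le> b" if "t < k" for t
  proof -
    have "q t \<in> ccp_points n m"
      using cq(1) that by blast
    from valid[rule_format, OF this] show ?thesis
      by (simp add: F_def split_def)
  qed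
  have "(\<Sum>(i, j) \<in> A. z i j) = (\<Sum>t<k. c t * (\<Sum>(i, j) \<in> A. snd (snd (q t)) i j))"
    unfolding z split_def sum_distrib_left by (rule sum.swap)
  moreover have "(\<Sum>(i, j) \<in> B. ysym y i j)
      = (\<Sum>t<k. c t * (\<Sum>(i, j) \<in> B. ysym (fst (snd (q t))) i j))"
    unfolding y ysym_def split_def sum_distrib_left by (rule sum.swap)
  ultimately have "(\<Sum>(i, j) \<in> A. z i j) + (\<Sum>(i, j) \<in> B. ysym y i j) = (\<Sum>t<k. c t * F (q t))"
    by (simp add: F_def distrib_left sum.distrib)
  also have "\<dots> \<le> (\<Sum>t<k. c t * b)"
    using cq(1) F_le by (intro sum_mono mult_left_mono) auto
  also have "\<dots> = b"
    using cq(2) by (simp add: sum_distrib_right[symmetric])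
  finally show "(\<Sum>(i, j) \<in> A. z i j) + (\<Sum>(i, j) \<in> B. ysym y i j) \<le> b" .
qed

theorem mainTheorem5:
  fixes n m :: nat and cyc :: "nat list" and U :: "(nat \<times> nat) set"
  assumes "n \<ge> 1" and "m \<ge> 1"
    and "distinct cyc" and "set cyc \<subseteq> {1..n}"
    and "1 < length cyc" and "length cyc < m"
    and "U \<subset> cycle_arcs cyc"
  shows "\<forall>(x, y, z) \<in> CCP n m.
           (\<Sum>(i, j) \<in> cycle_arcs cyc. z i j) + (\<Sum>(i, j) \<in> U. ysym y i j)
             \<le> real (card (cycle_arcs cyc)) - 1"
  using ccp_points_subtour_inequality[OF _ assms(3-7)]
  by (intro CCP_inequality_if_ccp_points) blast

end
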